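(* Let $g(x)=1-(1-x^2)^4$ for $|x|\le1$ and $g(x)=1$ otherwise. Fix $0\le q_o<\widetilde{q_o}$ and let $(q,p)$, respectively $(\widetilde q,\widetilde p)$, be the global solutions of $\dot q=p$, $\dot p=-g'(q)$ with initial data $(q_o,2)$, respectively $(\widetilde{q_o},2)$, at time $0$. Then $q(t)<\widetilde q(t)$ for all $t\ge0$. *)

theory Defs
  imports "HOL-Analysis.Analysis"
begin

definition g :: "real \<Rightarrow> real" where
  "g x = (if \<bar>x\<bar> \<le> 1 then 1 - (1 - x^2)^4 else 1)"

end

theory Submission
  imports Defs
begin

text \<open>
  Along either trajectory the energy \<open>p\<^sup>2 + 2 g(q)\<close> is conserved; since \<open>0 \<le> g \<le> 1\<close> and
  \<open>p(0) = 2\<close>, the momentum never vanishes, so it stays positive and \<open>q\<close> increases.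
  If \<open>q\<^sub>o \<ge> 1\<close>, both particles move where \<open>g = 1\<close>, hence uniformly with speed 2, and the
  gap is preserved. If \<open>q\<^sub>o < 1\<close>, then \<open>g(q\<^sub>o) < g(qt\<^sub>o)\<close> because \<open>g\<close> is strictly increasing
  on \<open>[0,1]\<close>; at a first meeting time both particles would be at the same place, so by
  energy conservation the initially leading one would be strictly faster there, which is
  impossible when it is being caught up.
\<close>

lemma g_has_real_derivative:
  "(g has_real_derivative (if \<bar>x\<bar> \<le> 1 then 8 * x * (1 - x\<^sup>2) ^ 3 else 0)) (at x)"
proof -
  let ?S = "{-1..1::real}" and ?T = "- {-1..1::real}"
  have g_If: "g = (\<lambda>x. if x \<in> ?S then 1 - (1 - x\<^sup>2) ^ 4 else 1)"
    by (auto simp: g_def fun_eq_iff abs_le_iff)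
  have "closure ?T \<subseteq> {x. 1 \<le> \<bar>x\<bar>}"
    by (rule closure_minimal) (auto intro!: closed_Collect_le continuous_intros)
  then have boundary: "x = 1 \<or> x = -1" if "x \<in> closure ?S" "x \<in> closure ?T" for x
    using that by auto
  have poly: "((\<lambda>x::real. 1 - (1 - x\<^sup>2) ^ 4) has_derivative (*) (8 * y * (1 - y\<^sup>2) ^ 3))
      (at y within U)" for y U
  proof -
    have "((\<lambda>x::real. 1 - (1 - x\<^sup>2) ^ 4) has_real_derivative 8 * y * (1 - y\<^sup>2) ^ 3) (at y within U)"
      by (auto intro!: derivative_eq_intros simp: algebra_simps)
    then show ?thesis
      by (simp add: has_field_derivative_def)
  qed
  have "((\<lambda>x. if x \<in> ?S then 1 - (1 - x\<^sup>2) ^ 4 else 1) has_derivative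
      (if x \<in> ?S then (*) (8 * x * (1 - x\<^sup>2) ^ 3) else (\<lambda>h. 0))) (at x within ?S \<union> ?T)"
  proof (rule has_derivative_If_within_closures)
    show "((\<lambda>x. 1::real) has_derivative (\<lambda>h. 0)) (at x within ?T \<union> (closure ?S \<inter> closure ?T))"
      by (rule has_derivative_const)
  next
    assume "x \<in> closure ?S" "x \<in> closure ?T"
    then have "x = 1 \<or> x = -1"
      by (rule boundary)
    then show "1 - (1 - x\<^sup>2) ^ 4 = 1"
      by auto
  next
    assume "x \<in> closure ?S" "x \<in> closure ?T"
    then have "x = 1 \<or> x = -1"
      by (rule boundary)
    then show "(*) (8 * x * (1 - x\<^sup>2) ^ 3) = (\<lambda>h. 0)"
      by auto
  qed (auto intro: poly)
  moreover have "(if x \<in> ?S then (*) (8 * x * (1 - x\<^sup>2) ^ 3) else (\<lambda>h. 0)) =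
      (*) (if \<bar>x\<bar> \<le> 1 then 8 * x * (1 - x\<^sup>2) ^ 3 else 0)"
    by (auto simp: abs_le_iff fun_eq_iff)
  ultimately show ?thesis
    by (simp add: g_If has_field_derivative_def)
qed

lemma g_has_deriv: "(g has_real_derivative deriv g x) (at x)"
  using DERIV_imp_deriv g_has_real_derivative by metis

lemma g_nonneg: "0 \<le> g x"
  and g_le_one: "g x \<le> 1"
proof -
  have "0 \<le> g x \<and> g x \<le> 1"
  proof (cases "\<bar>x\<bar> \<le> 1")
    case True
    then have "0 \<le> 1 - x\<^sup>2" "1 - x\<^sup>2 \<le> 1"
      by (auto simp: abs_square_le_1)
    then show ?thesis
      using True by (simp add: g_def power_le_one)
  qed (simp add: g_def)
  then show "0 \<le> g x" "g x \<le> 1" by auto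
qed

lemma g_eq_one:
  assumes "1 \<le> \<bar>x\<bar>"
  shows "g x = 1"
proof (cases "\<bar>x\<bar> = 1")
  case True
  then have "x\<^sup>2 = 1"
    by (cases "0 \<le> x") auto
  then show ?thesis
    by (simp add: g_def)
qed (use assms in \<open>simp add: g_def\<close>)

lemma g_strict_mono:
  assumes "0 \<le> a" "a < b" "a < 1"
  shows "g a < g b"
proof (cases "b < 1")
  case True
  have "a\<^sup>2 < b\<^sup>2" "b\<^sup>2 < 1"
    using assms True by (auto intro: power_strict_mono simp: power_less_one_iff)
  then have "(1 - b\<^sup>2) ^ 4 < (1 - a\<^sup>2) ^ 4"
    by (intro power_strict_mono) auto
  then show ?thesis
    using assms True by (simp add: g_def)
next
  case False
  have "a\<^sup>2 < 1"
    using assms by (simp add: power_less_one_iff)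
  then show ?thesis
    using assms False g_eq_one[of b] by (simp add: g_def)
qed

lemma hamiltonian_energy_conserved:
  fixes V V' q p :: "real \<Rightarrow> real"
  assumes "\<And>x. (V has_real_derivative V' x) (at x)"
    and "\<And>t. (q has_real_derivative p t) (at t)"
    and "\<And>t. (p has_real_derivative - V' (q t)) (at t)"
  shows "(p t)\<^sup>2 + 2 * V (q t) = (p s)\<^sup>2 + 2 * V (q s)"
proof -
  have "((\<lambda>t. (p t)\<^sup>2 + 2 * V (q t)) has_real_derivative 0) (at t)" for t
  proof -
    have "((\<lambda>t. (p t)\<^sup>2) has_real_derivative 2 * p t * - V' (q t)) (at t)"
      using DERIV_power[OF assms(3), of 2] by (simp add: mult_ac)
    moreover have "((\<lambda>t. V (q t)) has_real_derivative V' (q t) * p t) (at t)"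
      by (rule DERIV_chain2[OF assms(1,2)])
    ultimately have "((\<lambda>t. (p t)\<^sup>2 + 2 * V (q t)) has_real_derivative
        2 * p t * - V' (q t) + 2 * (V' (q t) * p t)) (at t)"
      by (intro DERIV_add DERIV_cmult)
    then show ?thesis
      by simp
  qed
  then show ?thesis
    using DERIV_isconst_all[of "\<lambda>t. (p t)\<^sup>2 + 2 * V (q t)" t s] by blast
qed

lemma positive_if_nonzero_continuous:
  fixes f :: "real \<Rightarrow> real"
  assumes "continuous_on UNIV f" "\<And>t. f t \<noteq> 0" "f 0 > 0"
  shows "f t > 0"
proof (rule ccontr)
  assume "\<not> f t > 0"
  have "connected (range f)"
    using assms(1) by (rule connected_continuous_image) simp
  then have "0 \<in> range f"
    using \<open>\<not> f t > 0\<close> assms(3) unfolding connected_iff_interval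
    by (meson less_eq_real_def not_less rangeI)
  with assms(2) show False
    by auto
qed

lemma positive_if_derivative_positive_at_zeros:
  fixes d d' :: "real \<Rightarrow> real"
  assumes deriv: "\<And>t. (d has_real_derivative d' t) (at t)"
    and "d 0 > 0"
    and upcrossing: "\<And>t. 0 \<le> t \<Longrightarrow> d t = 0 \<Longrightarrow> d' t > 0"
    and "0 \<le> t"
  shows "d t > 0"
proof (rule ccontr)
  assume "\<not> d t > 0"
  have cont: "continuous_on S d" for S
    using deriv by (meson DERIV_continuous continuous_at_imp_continuous_on)
  define Z where "Z = {s. 0 \<le> s \<and> d s = 0}"
  have zero_before: "\<exists>r\<in>Z. r \<le> s" if "0 \<le> s" "d s \<le> 0" for s
    using IVT2'[of d s 0 0] that \<open>d 0 > 0\<close> cont by (auto simp: Z_def)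
  have "Z \<noteq> {}"
    using zero_before[OF \<open>0 \<le> t\<close>] \<open>\<not> d t > 0\<close> by (auto simp: Z_def)
  moreover have "bdd_below Z"
    by (auto simp: Z_def bdd_below_def)
  moreover have "closed Z"
    unfolding Z_def using cont[of UNIV]
    by (intro closed_Collect_conj closed_Collect_le closed_Collect_eq continuous_intros)
      (auto simp: continuous_on_eq_continuous_within)
  ultimately have "Inf Z \<in> Z"
    by (rule closed_contains_Inf)
  define t\<^sub>1 where "t\<^sub>1 = Inf Z"
  have "0 < t\<^sub>1" "d t\<^sub>1 = 0"
    using \<open>Inf Z \<in> Z\<close> \<open>d 0 > 0\<close> by (auto simp: t\<^sub>1_def Z_def less_eq_real_def)
  have positive_before: "d s > 0" if "0 \<le> s" and "s < t\<^sub>1" for s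
  proof (rule ccontr)
    assume "\<not> d s > 0"
    then obtain r where "r \<in> Z" "r \<le> s"
      using zero_before \<open>0 \<le> s\<close> by (meson not_less)
    then show False
      using \<open>bdd_below Z\<close> \<open>s < t\<^sub>1\<close> cInf_lower[of r Z] by (simp add: t\<^sub>1_def)
  qed
  obtain e where "e > 0" and left: "\<And>h. 0 < h \<Longrightarrow> h < e \<Longrightarrow> d (t\<^sub>1 - h) < d t\<^sub>1"
    using DERIV_pos_inc_left[OF deriv upcrossing[of t\<^sub>1]] \<open>0 < t\<^sub>1\<close> \<open>d t\<^sub>1 = 0\<close> by force
  define h where "h = min (e / 2) t\<^sub>1"
  have "0 < h" "h < e" "h \<le> t\<^sub>1"
    using \<open>e > 0\<close> \<open>0 < t\<^sub>1\<close> by (auto simp: h_def)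
  then show False
    using left[of h] positive_before[of "t\<^sub>1 - h"] \<open>d t\<^sub>1 = 0\<close> by simp
qed

locale g_trajectory =
  fixes q p :: "real \<Rightarrow> real"
  assumes q_deriv: "\<And>t. (q has_real_derivative p t) (at t)"
    and p_deriv: "\<And>t. (p has_real_derivative - deriv g (q t)) (at t)"
    and p_0: "p 0 = 2"
begin

lemma energy: "(p t)\<^sup>2 = 4 + 2 * g (q 0) - 2 * g (q t)"
  using hamiltonian_energy_conserved[OF g_has_deriv q_deriv p_deriv, of t 0] p_0 by simp

lemma p_pos: "p t > 0"
proof (rule positive_if_nonzero_continuous[of p])
  show "continuous_on UNIV p"
    using p_deriv by (meson DERIV_continuous continuous_at_imp_continuous_on)
  show "p t \<noteq> 0" for t
    using energy[of t] g_nonneg[of "q 0"] g_le_one[of "q t"] by auto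
qed (simp add: p_0)

lemma q_strict_mono:
  assumes "s < t"
  shows "q s < q t"
  by (rule DERIV_pos_imp_increasing[of s t q]) (use assms q_deriv p_pos in blast)+

lemma p_eq_2_if_starts_beyond_1:
  assumes "1 \<le> q 0" "0 \<le> t"
  shows "p t = 2"
proof -
  have "g (q t) = g (q 0)"
    using assms q_strict_mono[of 0 t] g_eq_one by (cases "t = 0") auto
  then have "(p t)\<^sup>2 = 2\<^sup>2"
    using energy[of t] by simp
  then show ?thesis
    using p_pos[of t] power2_eq_iff_nonneg[of "p t" 2] by simp
qed

lemma q_linear_if_starts_beyond_1:
  assumes "1 \<le> q 0" "0 \<le> t"
  shows "q t = q 0 + 2 * t"
proof (cases "t = 0")
  case False
  have "(\<lambda>s. q s - 2 * s) t = (\<lambda>s. q s - 2 * s) 0"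
  proof (rule DERIV_isconst2[of 0 t])
    show "continuous_on {0..t} (\<lambda>s. q s - 2 * s)"
      using q_deriv by (intro continuous_intros)
        (meson DERIV_continuous continuous_at_imp_continuous_on)
    show "((\<lambda>s. q s - 2 * s) has_real_derivative 0) (at s)" if "0 < s" and "s < t" for s
      using p_eq_2_if_starts_beyond_1[OF assms(1), of s] that
      by (auto intro!: derivative_eq_intros q_deriv)
  qed (use assms False in auto)
  then show ?thesis
    by simp
qed simp

end

locale g_trajectory_pair =
  behind: g_trajectory q p + ahead: g_trajectory qt pt for q p qt pt +
  assumes starts_behind: "q 0 < qt 0"
begin

lemma stays_behind_if_energy_gap:
  assumes "g (q 0) < g (qt 0)" and "0 \<le> t"
  shows "q t < qt t"
proof -
  have "qt t - q t > 0"
  proof (rule positive_if_derivative_positive_at_zeros[of "\<lambda>t. qt t - q t" "\<lambda>t. pt t - p t"])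
    show "((\<lambda>t. qt t - q t) has_real_derivative pt t - p t) (at t)" for t
      by (intro DERIV_diff behind.q_deriv ahead.q_deriv)
    show "pt s - p s > 0" if "0 \<le> s" and "qt s - q s = 0" for s
    proof -
      have "(p s)\<^sup>2 < (pt s)\<^sup>2"
        using behind.energy[of s] ahead.energy[of s] assms(1) that(2) by simp
      then show ?thesis
        using power2_less_imp_less ahead.p_pos[of s] by fastforce
    qed
  qed (use starts_behind assms(2) in simp_all)
  then show ?thesis
    by simp
qed

lemma stays_behind_if_starts_beyond_1:
  assumes "1 \<le> q 0" and "0 \<le> t"
  shows "q t < qt t"
  using behind.q_linear_if_starts_beyond_1[OF assms] ahead.q_linear_if_starts_beyond_1[OF _ assms(2)]
    assms(1) starts_behind by simp

end

theorem lemma5p11: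
  fixes q p qt pt :: "real \<Rightarrow> real" and q\<^sub>o qt\<^sub>o :: real
  assumes "0 \<le> q\<^sub>o" and "q\<^sub>o < qt\<^sub>o"
    and "\<And>t. (q has_real_derivative p t) (at t)"
    and "\<And>t. (p has_real_derivative - deriv g (q t)) (at t)"
    and "q 0 = q\<^sub>o" and "p 0 = 2"
    and "\<And>t. (qt has_real_derivative pt t) (at t)"
    and "\<And>t. (pt has_real_derivative - deriv g (qt t)) (at t)"
    and "qt 0 = qt\<^sub>o" and "pt 0 = 2"
  shows "\<forall>t\<ge>0. q t < qt t"
proof -
  interpret g_trajectory_pair q p qt pt
    by unfold_locales (use assms in auto)
  show ?thesis
  proof (cases "q\<^sub>o < 1")
    case True
    then have "g (q 0) < g (qt 0)"
      using g_strict_mono assms(1,2,5,9) by simp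
    then show ?thesis
      using stays_behind_if_energy_gap by blast
  next
    case False
    then show ?thesis
      using stays_behind_if_starts_beyond_1 assms(5) by (metis not_less)
  qed
qed

end
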